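(* Define transition probabilities $P(n\searrow m)$ on $\mathbb{N}_{\ge1}=\{2,3,4,\dots\}$ as follows. If $n$ is composite and not a prime power, set $P(n\searrow n/q)=\frac{\Lambda(q)}{\log n}$ for every divisor $q>1$ of $n$, and $P(n\searrow m)=0$ for all other $m$. If $n=p$ is prime, set $P(p\searrow p)=1$ and $P(p\searrow m)=0$ for $m\ne p$. If $n=p^k$ with $p$ prime and $k\ge2$, set $P(n\searrow n/p^j)=\frac1k$ for $j=1,\dots,k-2$, $P(n\searrow p)=\frac2k$, and $P(n\searrow m)=0$ for all other $m$. Let $\nu_0(n)=\frac{1}{n\log n}$. Then for every $m\in\mathbb{N}_{\ge1}$, $$\sum_{q>1}\nu_0(mq)\,P(mq\searrow m)\le\nu_0(m).$$
   Context: $\Lambda$ is the von Mangoldt function: $\Lambda(q)=\log p$ if $q=p^j$ for a prime $p$ and $j\ge1$, and $\Lambda(q)=0$ otherwise. The sum is over integers $q\ge2$. *)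

theory Defs
  imports "HOL-Analysis.Analysis" "HOL-Number_Theory.Number_Theory"
begin

text \<open>Transition probabilities P(n \<searrow> m) on the integers n \<ge> 2.
  Values for n < 2 are irrelevant and set to 0.\<close>
definition trans_prob :: "nat \<Rightarrow> nat \<Rightarrow> real" where
  "trans_prob n m =
     (if n < 2 then 0
      else if prime n then (if m = n then 1 else 0)
      else if primepow n then
        (let p = aprimedivisor n; k = multiplicity p n in
           if m = p then 2 / real k
           else if (\<exists>j\<in>{1..k-2}. m = n div p ^ j) then 1 / real k
           else 0)
      else (if m dvd n \<and> n div m > 1 then mangoldt (n div m) / ln (real n) else 0))"

definition nu0 :: "nat \<Rightarrow> real" where
  "nu0 n = 1 / (real n * ln (real n))"

end

theory Submission
  imports Defs "HOL-Real_Asymp.Real_Asymp"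
begin

text \<open>Write L = ln m. Unless m q is a prime power, nu0 (m q) P(m q \<searrow> m) equals
  \<Lambda>(q) / (m q ln(m q)^2); when m q is a prime power it is this quantity again, or twice it
  if m itself is prime. With c = L + 1/4 and the weight W(y) = 2 / (y (c + ln y)^3), one has
  1 / (q (L + ln q)^2) \<le> \<Sum>k\<ge>1. W(q k); summing against \<Lambda>(q) and using
  \<Sum>q|n. \<Lambda>(q) = ln n bounds the main sum by \<Sum>n. ln n W(n), which is compared with
  the integral of ln y W(y) beyond 3. For m prime the doubled terms form a geometric series
  bounded by 1 / (4 L m (m - 1)), and m - 1 \<ge> L + L^2/2. What is left is an explicit
  inequality in L \<ge> ln 2, which needs ln 2 \<ge> 0.69 and 1.09 \<le> ln 3 \<le> 1.1.\<close>

section \<open>The transition terms\<close>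

definition mangoldt_term :: "nat \<Rightarrow> nat \<Rightarrow> real" where
  "mangoldt_term m q = mangoldt q / (real (m * q) * ln (real (m * q))^2)"

lemma mangoldt_term_nonneg: "0 \<le> mangoldt_term m q"
  unfolding mangoldt_term_def by (intro divide_nonneg_nonneg mangoldt_nonneg) simp

lemma mangoldt_term_eq:
  assumes "0 < m" "0 < q"
  shows "mangoldt_term m q = mangoldt q / (real q * (ln (real m) + ln (real q))^2) / real m"
  using assms by (simp add: mangoldt_term_def ln_mult)

lemma trans_prob_nonneg: "0 \<le> trans_prob n m"
  unfolding trans_prob_def Let_def by (auto intro!: divide_nonneg_nonneg mangoldt_nonneg)

lemma nu0_pos: "2 \<le> n \<Longrightarrow> 0 < nu0 n"
  unfolding nu0_def by (intro divide_pos_pos mult_pos_pos) auto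

lemma primepow_mult_nat_obtain:
  fixes m q :: nat
  assumes "primepow (m * q)" "m \<noteq> 1" "q \<noteq> 1"
  obtains p a b where "prime p" "0 < a" "0 < b" "m = p ^ a" "q = p ^ b"
proof -
  obtain p k where p: "prime p" and "m * q = p ^ k"
    using assms(1) by (auto simp: primepow_def)
  then obtain a b where "m = p ^ a" "q = p ^ b"
    using prime_power_mult_nat by blast
  with p assms(2,3) that show ?thesis by (metis gr0I power_0)
qed

lemma primepow_prime_mult_obtain:
  fixes p q :: nat
  assumes p: "prime p" and "primepow (p * q)" "q \<noteq> 1"
  obtains i where "0 < i" "q = p ^ i"
proof -
  have "p \<noteq> 1" using p by auto
  then obtain p' a b where "0 < b" and pa: "p = p' ^ a" and "q = p' ^ b"
    using primepow_mult_nat_obtain assms(2,3) by metis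
  moreover have "a = 1" using p prime_power_iff[of p' a] by (simp add: pa)
  ultimately show ?thesis using that by auto
qed

lemma trans_prob_mult_not_primepow:
  assumes "2 \<le> m" "2 \<le> q" "\<not> primepow (m * q)"
  shows "trans_prob (m * q) m = mangoldt q / ln (real (m * q))"
proof -
  have "\<not> prime (m * q)" using assms(3) primepow_prime by blast
  moreover have "2 \<le> m * q" using mult_le_mono[OF assms(1,2)] by simp
  ultimately show ?thesis using assms by (simp add: trans_prob_def)
qed

lemma trans_prob_prime_power:
  assumes p: "prime p" and a: "0 < a" and b: "0 < b"
  shows "trans_prob (p ^ (a + b)) (p ^ a) = (if a = 1 then 2 else 1) / real (a + b)"
proof -
  define n where "n = p ^ (a + b)"
  have p1: "1 < p" using p by (rule prime_gt_1_nat)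
  have "p \<le> n" using p1 a by (simp add: n_def self_le_power)
  then have n2: "\<not> n < 2" using p1 by linarith
  have np: "\<not> prime n" using a b by (simp add: n_def prime_power_iff)
  have pp: "primepow n" using p a by (simp add: n_def)
  have apd: "aprimedivisor n = p" using p a by (simp add: n_def aprimedivisor_prime_power)
  have mult: "multiplicity p n = a + b" using p by (simp add: n_def multiplicity_same_power)
  have tp: "trans_prob n (p ^ a) = (if p ^ a = p then 2 / real (a + b)
      else if (\<exists>j\<in>{1..a + b - 2}. p ^ a = n div p ^ j) then 1 / real (a + b) else 0)"
    by (simp only: trans_prob_def Let_def apd mult n2 np pp if_False if_True)
  show ?thesis
  proof (cases "a = 1")
    case True
    then show ?thesis using tp by (simp add: n_def)
  next
    case False
    have neq: "p ^ a \<noteq> p" using False p1 power_inject_exp[of p a 1] by simp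
    have ex: "\<exists>j\<in>{1..a + b - 2}. p ^ a = n div p ^ j"
    proof
      show "b \<in> {1..a + b - 2}" using a b False by auto
      show "p ^ a = n div p ^ b" using p1 by (simp add: n_def power_add)
    qed
    have "trans_prob n (p ^ a) = 1 / real (a + b)"
      by (simp only: tp neq ex if_False if_True)
    then show ?thesis using False by (simp add: n_def)
  qed
qed

lemma nu0_trans_prob_prime_power:
  assumes p: "prime p" and a: "0 < a" and b: "0 < b"
  shows "nu0 (p ^ a * p ^ b) * trans_prob (p ^ a * p ^ b) (p ^ a)
           = (if a = 1 then 2 else 1) * mangoldt_term (p ^ a) (p ^ b)"
proof -
  define n where "n = p ^ a * p ^ b"
  define K where "K = real (a + b)"
  define k :: real where "k = (if a = 1 then 2 else 1)"
  have n: "n = p ^ (a + b)" by (simp add: n_def power_add)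
  have pos: "0 < real n" "0 < ln (real p)" "0 < K"
    using prime_gt_1_nat[OF p] a by (simp_all add: n K_def)
  have lnn: "ln (real n) = K * ln (real p)" by (simp add: n K_def ln_realpow)
  have "mangoldt_term (p ^ a) (p ^ b) = ln (real p) / (real n * (K * ln (real p))^2)"
    using p b by (simp add: mangoldt_term_def n_def[symmetric] lnn)
  moreover have "trans_prob n (p ^ a) = k / K"
    using trans_prob_prime_power[OF p a b] by (simp add: n k_def K_def)
  moreover have "nu0 n * (k / K) = k * (ln (real p) / (real n * (K * ln (real p))^2))"
    using pos by (simp add: nu0_def lnn field_simps power2_eq_square)
  ultimately show ?thesis by (simp add: n_def k_def)
qed

lemma nu0_trans_prob_le:
  assumes m: "2 \<le> m" and q: "2 \<le> q"
  shows "nu0 (m * q) * trans_prob (m * q) m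
           \<le> mangoldt_term m q + (if prime m \<and> primepow (m * q) then mangoldt_term m q else 0)"
proof (cases "primepow (m * q)")
  case True
  moreover have "m \<noteq> 1" "q \<noteq> 1" using m q by simp_all
  ultimately obtain p a b where p: "prime p" "0 < a" "0 < b" and mq: "m = p ^ a" "q = p ^ b"
    by (rule primepow_mult_nat_obtain)
  show ?thesis
    using nu0_trans_prob_prime_power[OF p] mangoldt_term_nonneg[of m q] True p(1)
    by (auto simp: mq)
next
  case False
  have "1 < real (m * q)" using mult_le_mono[OF m q] by (simp del: of_nat_mult)
  then have "0 < ln (real (m * q))" by simp
  then show ?thesis
    using False trans_prob_mult_not_primepow[OF m q False]
    by (simp add: nu0_def mangoldt_term_def power2_eq_square)
qed

lemma sum_inverse_powers_le:
  fixes p :: nat and G :: "nat set"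
  assumes p: "1 < p" and G: "finite G" and powers: "\<And>q. q \<in> G \<Longrightarrow> \<exists>i>0. q = p ^ i"
  shows "(\<Sum>q\<in>G. 1 / real q) \<le> 1 / (real p - 1)"
proof -
  obtain Q where Q: "\<And>q. q \<in> G \<Longrightarrow> q \<le> Q" using G finite_nat_set_iff_bounded_le by auto
  have "G \<subseteq> (\<lambda>i. p ^ Suc i) ` {..<Q}"
  proof
    fix q assume q: "q \<in> G"
    then obtain i where i: "0 < i" "q = p ^ i" using powers by auto
    have "i < 2 ^ i" by (rule less_exp)
    also have "2 ^ i \<le> p ^ i" using p by (intro power_mono) simp_all
    also have "p ^ i \<le> Q" using Q q i by auto
    finally have "i - 1 < Q" by simp
    moreover have "q = p ^ Suc (i - 1)" using i by simp
    ultimately show "q \<in> (\<lambda>i. p ^ Suc i) ` {..<Q}" by blast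
  qed
  then have "(\<Sum>q\<in>G. 1 / real q) \<le> (\<Sum>q\<in>(\<lambda>i. p ^ Suc i) ` {..<Q}. 1 / real q)"
    by (intro sum_mono2) auto
  also have "\<dots> = (1 / real p) * (\<Sum>i<Q. (1 / real p) ^ i)"
    using p by (subst sum.reindex) (auto simp: inj_on_def sum_distrib_left power_divide)
  also have "\<dots> = (1 / real p) * ((1 - (1 / real p) ^ Q) / (1 - 1 / real p))"
    using p by (simp add: sum_gp_strict)
  also have "\<dots> \<le> (1 / real p) * (1 / (1 - 1 / real p))"
    using p by (intro mult_left_mono divide_right_mono) simp_all
  also have "\<dots> = 1 / (real p - 1)"
    using p by (simp add: field_simps)
  finally show ?thesis .
qed

lemma mangoldt_term_prime_power_le:
  assumes p: "prime p" and i: "0 < i"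
  shows "mangoldt_term p (p ^ i) \<le> 1 / (4 * real p * ln (real p)) * (1 / real (p ^ i))"
proof -
  define L where "L = ln (real p)"
  define q where "q = p ^ i"
  have p1: "1 < p" using p by (rule prime_gt_1_nat)
  have L: "0 < L" using p1 by (simp add: L_def)
  have mq: "mangoldt q = L" using p i by (simp add: q_def L_def)
  have pq: "real p \<le> real q" using i p1 by (simp add: q_def self_le_power)
  then have Lq: "2 * L \<le> L + ln (real q)" using p1 by (simp add: L_def)
  have "mangoldt_term p q = L / (real q * (L + ln (real q))^2) / real p"
    using mangoldt_term_eq[of p q] mq p1 pq by (simp add: L_def)
  also have "\<dots> \<le> L / (real q * (2 * L)^2) / real p"
    using L p1 pq Lq
    by (intro divide_right_mono divide_left_mono mult_left_mono mult_pos_pos power_mono) simp_all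
  also have "\<dots> = 1 / (4 * real p * L) * (1 / real q)"
    using L by (simp add: field_simps power2_eq_square)
  finally show ?thesis by (simp add: L_def q_def)
qed

lemma ln_add_half_ln_sq_le: "1 \<le> x \<Longrightarrow> ln x + (ln x)^2 / 2 \<le> x - (1::real)"
  using exp_lower_Taylor_quadratic[of "ln x"] by simp

lemma sum_prime_power_mangoldt_term_le:
  fixes p :: nat and F :: "nat set"
  assumes p: "prime p" and F: "finite F" "F \<subseteq> {2..}"
  defines "L \<equiv> ln (real p)"
  shows "(\<Sum>q\<in>F. if primepow (p * q) then mangoldt_term p q else 0)
           \<le> 1 / (4 * L * (L + L^2 / 2)) / real p"
proof -
  have p1: "1 < p" using p by (rule prime_gt_1_nat)
  have L: "0 < L" using p1 by (simp add: L_def)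
  define G where "G = {q\<in>F. primepow (p * q)}"
  have G: "finite G" using F by (simp add: G_def)
  have powers: "\<exists>i>0. q = p ^ i" if "q \<in> G" for q
  proof -
    have "primepow (p * q)" "q \<noteq> 1" using that F by (auto simp: G_def)
    then obtain i where "0 < i" "q = p ^ i" by (rule primepow_prime_mult_obtain[OF p])
    then show ?thesis by blast
  qed
  have "(\<Sum>q\<in>F. if primepow (p * q) then mangoldt_term p q else 0) = (\<Sum>q\<in>G. mangoldt_term p q)"
    unfolding G_def by (rule sum.inter_filter[OF F(1), symmetric])
  also have "\<dots> \<le> (\<Sum>q\<in>G. 1 / (4 * real p * L) * (1 / real q))"
    using powers mangoldt_term_prime_power_le[OF p] by (fastforce simp: L_def intro!: sum_mono)
  also have "\<dots> = 1 / (4 * real p * L) * (\<Sum>q\<in>G. 1 / real q)"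
    by (simp add: sum_distrib_left)
  also have "\<dots> \<le> 1 / (4 * real p * L) * (1 / (real p - 1))"
    using sum_inverse_powers_le[OF p1 G powers] L by (intro mult_left_mono) simp_all
  also have "\<dots> = 1 / (4 * L * (real p - 1)) / real p" by (simp add: mult_ac)
  also have "\<dots> \<le> 1 / (4 * L * (L + L^2 / 2)) / real p"
    using L ln_add_half_ln_sq_le[of "real p"] p1 unfolding L_def
    by (intro divide_right_mono divide_left_mono mult_left_mono mult_pos_pos add_pos_nonneg) simp_all
  finally show ?thesis .
qed

section \<open>Comparison with an integral\<close>

definition inv_log_sq :: "real \<Rightarrow> real \<Rightarrow> real" where
  "inv_log_sq c y = 1 / (c + ln y)^2"

text \<open>Minus the derivative of \<^const>\<open>inv_log_sq\<close>.\<close>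
definition inv_log_sq_slope :: "real \<Rightarrow> real \<Rightarrow> real" where
  "inv_log_sq_slope c y = 2 / (y * (c + ln y)^3)"

definition log_ratio_sq :: "real \<Rightarrow> real \<Rightarrow> real" where
  "log_ratio_sq c y = (c + 2 * ln y) / (c + ln y)^2"

lemma add_ln_pos: "0 < c \<Longrightarrow> 1 \<le> y \<Longrightarrow> 0 < c + ln (y::real)"
  using ln_ge_zero[of y] by linarith

lemma inv_log_sq_slope_nonneg: "0 < c \<Longrightarrow> 1 \<le> y \<Longrightarrow> 0 \<le> inv_log_sq_slope c y"
  unfolding inv_log_sq_slope_def using add_ln_pos[of c y] by simp

lemma log_ratio_sq_nonneg: "0 < c \<Longrightarrow> 1 \<le> y \<Longrightarrow> 0 \<le> log_ratio_sq c y"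
  unfolding log_ratio_sq_def using add_ln_pos[of c y] ln_ge_zero[of y] by simp

lemma inv_log_sq_antimono: "0 < c \<Longrightarrow> 1 \<le> x \<Longrightarrow> x \<le> z \<Longrightarrow> inv_log_sq c z \<le> inv_log_sq c x"
  unfolding inv_log_sq_def using add_ln_pos[of c x] add_ln_pos[of c z]
  by (intro divide_left_mono power_mono mult_pos_pos) auto

lemma inv_log_sq_diff_le:
  assumes c: "0 < c" and x: "1 \<le> x" and xz: "x \<le> z"
  shows "inv_log_sq c x - inv_log_sq c z \<le> (z - x) * inv_log_sq_slope c x"
proof -
  define X where "X = c + ln x"
  define Z where "Z = c + ln z"
  have X: "0 < X" using add_ln_pos[OF c x] by (simp add: X_def)
  have XZ: "X \<le> Z" using x xz by (simp add: X_def Z_def)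
  have "Z - X = ln (z / x)" using x xz by (simp add: X_def Z_def ln_div)
  also have "\<dots> \<le> z / x - 1" using x xz by (intro ln_le_minus_one) simp
  finally have ZX: "Z - X \<le> (z - x) / x" using x by (simp add: field_simps)
  have "(Z + X) * X^3 \<le> 2 * (X^2 * Z^2)"
  proof -
    have "(Z + X) * X \<le> (Z + Z) * Z" using X XZ by (intro mult_mono) simp_all
    then have "(Z + X) * X * X^2 \<le> 2 * Z * Z * X^2" by (intro mult_right_mono) simp_all
    then show ?thesis by (simp add: power2_eq_square power3_eq_cube algebra_simps)
  qed
  then have quot: "(Z + X) / (X^2 * Z^2) \<le> 2 / X^3"
    using X XZ by (simp add: divide_simps mult.commute)
  have "inv_log_sq c x - inv_log_sq c z = (Z - X) * ((Z + X) / (X^2 * Z^2))"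
    using X XZ by (simp add: inv_log_sq_def X_def[symmetric] Z_def[symmetric] field_simps
        power2_eq_square)
  also have "\<dots> \<le> ((z - x) / x) * (2 / X^3)"
    using ZX quot X XZ by (intro mult_mono) simp_all
  also have "\<dots> = (z - x) * inv_log_sq_slope c x" by (simp add: inv_log_sq_slope_def X_def)
  finally show ?thesis .
qed

lemma inv_log_sq_diff_multiples_le:
  assumes c: "0 < c" and q: "1 \<le> q" and j: "1 \<le> j" "j \<le> K"
  shows "inv_log_sq c (q * real j) - inv_log_sq c (q * real K)
           \<le> q * (\<Sum>k\<in>{j..<K}. inv_log_sq_slope c (q * real k))"
  using j(2)
proof (induction K rule: dec_induct)
  case base
  then show ?case by simp
next
  case (step K)
  have "1 * 1 \<le> q * real K" using q step j by (intro mult_mono) simp_all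
  then have "inv_log_sq c (q * real K) - inv_log_sq c (q * real (Suc K))
      \<le> (q * real (Suc K) - q * real K) * inv_log_sq_slope c (q * real K)"
    using q by (intro inv_log_sq_diff_le[OF c]) simp_all
  then show ?case using step by (simp add: algebra_simps)
qed

lemma inverse_shifted_sq_le:
  fixes x :: real
  assumes x: "158/100 \<le> x"
  shows "1 / (x - 1/4)^2 \<le> 2 / x^3 + 1 / (x + 25/36)^2"
proof -
  define t where "t = x - 158/100"
  have "0 \<le> 731125091/150000000 + t*(54011077/5062500 + t*(1579889/202500 + t*(4172/2025 + t/9)))"
    using x by (simp add: t_def)
  moreover have "(x - 1/4)^2 * (2 * (x + 25/36)^2 + x^3) - x^3 * (x + 25/36)^2
      = 731125091/150000000 + t*(54011077/5062500 + t*(1579889/202500 + t*(4172/2025 + t/9)))"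
    by (simp add: t_def field_simps power2_eq_square power3_eq_cube)
  ultimately have "x^3 * (x + 25/36)^2 \<le> (x - 1/4)^2 * (2 * (x + 25/36)^2 + x^3)" by linarith
  then show ?thesis using x by (simp add: field_simps)
qed

lemma inv_mult_log_sq_le_slope:
  fixes L q :: real
  assumes L: "ln 2 \<le> L" and q: "2 \<le> q"
  shows "1 / (q * (L + ln q)^2)
           \<le> inv_log_sq_slope (L + 1/4) q + inv_log_sq (L + 1/4) (2 * q) / q"
proof -
  define x where "x = L + 1/4 + ln q"
  have "ln 2 \<le> ln q" using q by simp
  then have x: "158/100 \<le> x" using ln2_ge_two_thirds L by (simp add: x_def)
  have "1 / (x + 25/36)^2 \<le> 1 / (x + ln 2)^2"
    using ln2_le_25_over_36 ln2_ge_two_thirds x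
    by (intro divide_left_mono power_mono mult_pos_pos) simp_all
  then have "1 / (x - 1/4)^2 \<le> 2 / x^3 + 1 / (x + ln 2)^2"
    using inverse_shifted_sq_le[OF x] by linarith
  have "1 / (q * (L + ln q)^2) = (1 / (x - 1/4)^2) / q" by (simp add: x_def mult.commute)
  also have "\<dots> \<le> (2 / x^3 + 1 / (x + ln 2)^2) / q"
    using \<open>1 / (x - 1/4)^2 \<le> 2 / x^3 + 1 / (x + ln 2)^2\<close> q by (intro divide_right_mono) simp_all
  also have "L + 1/4 + ln (2 * q) = x + ln 2" using q by (simp add: x_def ln_mult)
  then have "(2 / x^3 + 1 / (x + ln 2)^2) / q
      = inv_log_sq_slope (L + 1/4) q + inv_log_sq (L + 1/4) (2 * q) / q"
    by (simp add: inv_log_sq_slope_def inv_log_sq_def x_def[symmetric] add_divide_distrib)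
  finally show ?thesis .
qed

lemma inv_mult_log_sq_le_sum_slope:
  fixes L q :: real and K :: nat
  assumes L: "ln 2 \<le> L" and q: "2 \<le> q" and K: "2 \<le> K"
  defines "c \<equiv> L + 1/4"
  shows "1 / (q * (L + ln q)^2)
           \<le> (\<Sum>k\<in>{1..<K}. inv_log_sq_slope c (q * real k)) + inv_log_sq c (real K) / q"
proof -
  have c: "0 < c" unfolding c_def using L ln2_ge_two_thirds by linarith
  have "inv_log_sq c (q * 2) - inv_log_sq c (q * real K)
      \<le> q * (\<Sum>k\<in>{2..<K}. inv_log_sq_slope c (q * real k))"
    using inv_log_sq_diff_multiples_le[OF c _ _ K, of q] q by simp
  moreover have "inv_log_sq c (q * real K) \<le> inv_log_sq c (real K)"
    using q K by (intro inv_log_sq_antimono[OF c]) simp_all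
  ultimately have "inv_log_sq c (2 * q) / q
      \<le> (\<Sum>k\<in>{2..<K}. inv_log_sq_slope c (q * real k)) + inv_log_sq c (real K) / q"
    using q by (simp add: field_simps mult.commute)
  moreover have "{1..<K} = insert 1 {2..<K}" using K by auto
  ultimately show ?thesis
    using inv_mult_log_sq_le_slope[OF L q] by (simp add: c_def)
qed

lemma sum_mangoldt_multiples_le:
  fixes f :: "nat \<Rightarrow> real" and F :: "nat set"
  assumes F: "finite F" "0 \<notin> F" and f: "\<And>n. 1 \<le> n \<Longrightarrow> 0 \<le> f n"
    and N: "\<And>q. q \<in> F \<Longrightarrow> q * K \<le> N"
  shows "(\<Sum>q\<in>F. mangoldt q * (\<Sum>k\<in>{1..<K}. f (q * k))) \<le> (\<Sum>n\<in>{1..N}. ln (real n) * f n)"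
proof -
  have "(\<Sum>q\<in>F. mangoldt q * (\<Sum>k\<in>{1..<K}. f (q * k)))
      \<le> (\<Sum>q\<in>F. \<Sum>n\<in>{n\<in>{1..N}. q dvd n}. mangoldt q * f n)"
  proof (intro sum_mono)
    fix q assume q: "q \<in> F"
    then have q0: "0 < q" using F by (cases q) auto
    have "(\<Sum>k\<in>{1..<K}. f (q * k)) = (\<Sum>n\<in>(\<lambda>k. q * k) ` {1..<K}. f n)"
      using q0 by (subst sum.reindex) (auto simp: inj_on_def)
    also have "\<dots> \<le> (\<Sum>n\<in>{n\<in>{1..N}. q dvd n}. f n)"
    proof (intro sum_mono2)
      show "(\<lambda>k. q * k) ` {1..<K} \<subseteq> {n\<in>{1..N}. q dvd n}"
        using q0 N[OF q] by (auto intro: order.trans[of _ "q * K"])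
    qed (auto intro: f)
    finally show "mangoldt q * (\<Sum>k\<in>{1..<K}. f (q * k)) \<le> (\<Sum>n\<in>{n\<in>{1..N}. q dvd n}. mangoldt q * f n)"
      by (simp add: sum_distrib_left[symmetric] mult_left_mono mangoldt_nonneg)
  qed
  also have "\<dots> = (\<Sum>n\<in>{1..N}. (\<Sum>q\<in>{q\<in>F. q dvd n}. mangoldt q) * f n)"
    by (subst sum.swap_restrict) (simp_all add: F sum_distrib_right)
  also have "\<dots> \<le> (\<Sum>n\<in>{1..N}. ln (real n) * f n)"
  proof (intro sum_mono mult_right_mono)
    fix n assume n: "n \<in> {1..N}"
    then show "0 \<le> f n" by (intro f) simp
    have "(\<Sum>q\<in>{q\<in>F. q dvd n}. mangoldt q) \<le> (\<Sum>d | d dvd n. mangoldt d :: real)"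
      using n by (intro sum_mono2 mangoldt_nonneg) auto
    also have "\<dots> = ln (real n)" using n mangoldt_sum[of n, where 'a = real] by simp
    finally show "(\<Sum>q\<in>{q\<in>F. q dvd n}. mangoldt q) \<le> ln (real n)" .
  qed
  finally show ?thesis .
qed

lemma ln_mult_slope_antimono:
  assumes c: "0 < c" and x: "exp 1 \<le> x" and xy: "x \<le> y"
  shows "ln y * inv_log_sq_slope c y \<le> ln x * inv_log_sq_slope c x"
proof -
  have x1: "1 \<le> x" using x exp_ge_add_one_self[of 1] by linarith
  have y1: "1 \<le> y" using x1 xy by linarith
  have "ln y / y \<le> ln x / x" by (rule ln_x_over_x_mono[OF x xy])
  moreover have "1 / (c + ln y)^3 \<le> 1 / (c + ln x)^3"
    using add_ln_pos[OF c x1] add_ln_pos[OF c y1] x1 xy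
    by (intro divide_left_mono power_mono mult_pos_pos) simp_all
  ultimately have "2 * (ln y / y) * (1 / (c + ln y)^3) \<le> 2 * (ln x / x) * (1 / (c + ln x)^3)"
    using x1 xy add_ln_pos[OF c x1] add_ln_pos[OF c y1] by (intro mult_mono mult_left_mono) simp_all
  then show ?thesis by (simp add: inv_log_sq_slope_def mult.commute)
qed

lemma has_real_derivative_log_ratio_sq:
  assumes c: "0 < c" and y: "1 \<le> y"
  shows "(log_ratio_sq c has_real_derivative -(ln y * inv_log_sq_slope c y)) (at y)"
proof -
  have pos: "0 < c + ln y" by (rule add_ln_pos[OF c y])
  have num: "((\<lambda>t. c + 2 * ln t) has_real_derivative 2 / y) (at y)"
    using y by (auto intro!: derivative_eq_intros)
  have den: "((\<lambda>t. (c + ln t)^2) has_real_derivative 2 * (c + ln y) / y) (at y)"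
    using y by (auto intro!: derivative_eq_intros)
  have "((2 / y) * (c + ln y)^2 - (2 * (c + ln y) / y) * (c + 2 * ln y)) / ((c + ln y)^2)^Suc (Suc 0)
      = -(ln y * inv_log_sq_slope c y)"
  proof -
    define X where "X = c + ln y"
    have X: "0 < X" using pos by (simp add: X_def)
    have two: "c + 2 * ln y = X + ln y" by (simp add: X_def)
    show ?thesis
      unfolding two X_def[symmetric] inv_log_sq_slope_def
      using X y by (simp add: field_simps power2_eq_square power3_eq_cube)
  qed
  with DERIV_quotient[OF num den] pos show ?thesis
    by (simp add: log_ratio_sq_def[abs_def])
qed

lemma ln_mult_slope_le_log_ratio_sq_diff:
  assumes c: "0 < c" and y: "4 \<le> y"
  shows "ln y * inv_log_sq_slope c y \<le> log_ratio_sq c (y - 1) - log_ratio_sq c y"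
proof -
  define h where "h t = log_ratio_sq c t + ln y * inv_log_sq_slope c y * t" for t
  have "h y \<le> h (y - 1)"
  proof (rule DERIV_nonpos_imp_nonincreasing[of "y - 1" y h])
    fix t assume t: "y - 1 \<le> t" "t \<le> y"
    then have "(h has_real_derivative -(ln t * inv_log_sq_slope c t) + ln y * inv_log_sq_slope c y * 1) (at t)"
      unfolding h_def using y
      by (intro DERIV_add has_real_derivative_log_ratio_sq[OF c] DERIV_cmult DERIV_ident) simp
    moreover have "ln y * inv_log_sq_slope c y \<le> ln t * inv_log_sq_slope c t"
      using t y e_less_272 by (intro ln_mult_slope_antimono[OF c]) simp_all
    ultimately show "\<exists>d. (h has_real_derivative d) (at t) \<and> d \<le> 0" by force
  qed simp
  then show ?thesis by (simp add: h_def algebra_simps)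
qed

lemma sum_ln_mult_slope_le:
  assumes c: "0 < c"
  shows "(\<Sum>n\<in>{1..N}. ln (real n) * inv_log_sq_slope c (real n))
           \<le> ln 2 * inv_log_sq_slope c 2 + ln 3 * inv_log_sq_slope c 3 + log_ratio_sq c 3"
proof -
  define g where "g n = ln (real n) * inv_log_sq_slope c (real n)" for n
  have telescope: "sum g {1..M} + log_ratio_sq c (real M) \<le> g 2 + g 3 + log_ratio_sq c 3"
    if "3 \<le> M" for M
    using that
  proof (induction M rule: dec_induct)
    case base
    show ?case by (simp add: g_def numeral_3_eq_3 numeral_2_eq_2 atLeastAtMostSuc_conv)
  next
    case (step M)
    have "g (Suc M) \<le> log_ratio_sq c (real (Suc M) - 1) - log_ratio_sq c (real (Suc M))"
      unfolding g_def using step by (intro ln_mult_slope_le_log_ratio_sq_diff[OF c]) simp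
    then show ?case using step by simp
  qed
  define M where "M = max 3 N"
  have M: "3 \<le> M" by (simp add: M_def)
  have "sum g {1..N} \<le> sum g {1..M}"
    unfolding g_def M_def by (intro sum_mono2 mult_nonneg_nonneg inv_log_sq_slope_nonneg[OF c]) auto
  also have "\<dots> \<le> g 2 + g 3 + log_ratio_sq c 3"
    using telescope[OF M] log_ratio_sq_nonneg[OF c, of "real M"] M by simp
  finally show ?thesis by (simp add: g_def)
qed

text \<open>The terms n = 2, 3 of \<open>\<Sum>n. ln n W(n)\<close> plus \<open>\<integral>\<^sub>3\<^sup>\<infinity> ln y W(y) dy\<close>, where
  W = \<^const>\<open>inv_log_sq_slope\<close> (L + 1/4).\<close>
definition log_sum_majorant :: "real \<Rightarrow> real" where
  "log_sum_majorant L = ln 2 * inv_log_sq_slope (L + 1/4) 2 + ln 3 * inv_log_sq_slope (L + 1/4) 3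
     + log_ratio_sq (L + 1/4) 3"

lemma sum_mangoldt_inv_mult_log_sq_le_tail:
  fixes L :: real and F :: "nat set"
  assumes L: "ln 2 \<le> L" and F: "finite F" "F \<subseteq> {2..}" and K: "2 \<le> K"
  defines "c \<equiv> L + 1/4"
  shows "(\<Sum>q\<in>F. mangoldt q / (real q * (L + ln (real q))^2))
           \<le> log_sum_majorant L + (\<Sum>q\<in>F. mangoldt q / real q) * inv_log_sq c (real K)"
proof -
  have c: "0 < c" unfolding c_def using L ln2_ge_two_thirds by linarith
  obtain Q where Q: "\<And>q. q \<in> F \<Longrightarrow> q \<le> Q" using F(1) finite_nat_set_iff_bounded_le by auto
  have "(\<Sum>q\<in>F. mangoldt q / (real q * (L + ln (real q))^2))
      \<le> (\<Sum>q\<in>F. mangoldt q * ((\<Sum>k\<in>{1..<K}. inv_log_sq_slope c (real (q * k)))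
                                   + inv_log_sq c (real K) / real q))"
  proof (intro sum_mono)
    fix q assume "q \<in> F"
    then have "1 / (real q * (L + ln (real q))^2)
        \<le> (\<Sum>k\<in>{1..<K}. inv_log_sq_slope c (real (q * k))) + inv_log_sq c (real K) / real q"
      using inv_mult_log_sq_le_sum_slope[OF L _ K, of "real q"] F by (auto simp: c_def)
    from mult_left_mono[OF this mangoldt_nonneg]
    show "mangoldt q / (real q * (L + ln (real q))^2)
        \<le> mangoldt q * ((\<Sum>k\<in>{1..<K}. inv_log_sq_slope c (real (q * k)))
                          + inv_log_sq c (real K) / real q)"
      by simp
  qed
  also have "\<dots> = (\<Sum>q\<in>F. mangoldt q * (\<Sum>k\<in>{1..<K}. inv_log_sq_slope c (real (q * k))))
                  + (\<Sum>q\<in>F. mangoldt q / real q) * inv_log_sq c (real K)"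
    by (simp add: ring_distribs sum.distrib sum_distrib_right)
  also have "\<dots> \<le> (\<Sum>n\<in>{1..Q * K}. ln (real n) * inv_log_sq_slope c (real n))
                  + (\<Sum>q\<in>F. mangoldt q / real q) * inv_log_sq c (real K)"
    using F Q inv_log_sq_slope_nonneg[OF c]
    by (intro add_right_mono sum_mangoldt_multiples_le) auto
  also have "\<dots> \<le> log_sum_majorant L + (\<Sum>q\<in>F. mangoldt q / real q) * inv_log_sq c (real K)"
    using sum_ln_mult_slope_le[OF c] by (simp add: log_sum_majorant_def c_def)
  finally show ?thesis .
qed

lemma sum_mangoldt_inv_mult_log_sq_le:
  fixes L :: real and F :: "nat set"
  assumes L: "ln 2 \<le> L" and F: "finite F" "F \<subseteq> {2..}"
  shows "(\<Sum>q\<in>F. mangoldt q / (real q * (L + ln (real q))^2)) \<le> log_sum_majorant L"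
proof (rule LIMSEQ_le_const)
  define C where "C = (\<Sum>q\<in>F. mangoldt q / real q)"
  have "(\<lambda>K. C * inv_log_sq (L + 1/4) (real K)) \<longlonglongrightarrow> 0"
    unfolding inv_log_sq_def by real_asymp
  then show "(\<lambda>K. log_sum_majorant L + C * inv_log_sq (L + 1/4) (real K)) \<longlonglongrightarrow> log_sum_majorant L"
    using tendsto_add[OF tendsto_const, of _ 0 sequentially "log_sum_majorant L"] by simp
  show "\<exists>N. \<forall>K\<ge>N. (\<Sum>q\<in>F. mangoldt q / (real q * (L + ln (real q))^2))
      \<le> log_sum_majorant L + C * inv_log_sq (L + 1/4) (real K)"
    using sum_mangoldt_inv_mult_log_sq_le_tail[OF L F] unfolding C_def by blast
qed

section \<open>The numerical inequality\<close>

lemma ln3_ge_109_over_100: "109/100 \<le> ln (3::real)"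
  and ln3_le_11_over_10: "ln (3::real) \<le> 11/10"
  using ln_approx_bounds[of 3 3] by (simp_all add: eval_nat_numeral)

lemma ln2_ge_69_over_100: "69/100 \<le> ln (2::real)"
  using ln_approx_bounds[of 2 2] by (simp add: eval_nat_numeral)

lemma ln2_term_le:
  fixes a c :: real
  assumes a: "69/100 \<le> a" and c: "1/4 \<le> c"
  shows "4 * (c - 1/4) * (a / (c + a)^3) \<le> 1/c - 94/100 / (c * (c + 69/100))"
proof -
  define e f where "e = c + a" and "f = c + 69/100"
  have pos: "0 < c" "0 < e" "0 < f" using a c by (simp_all add: e_def f_def)
  have amgm: "4 * a * c \<le> e^2"
    using sum_squares_ge_zero[of "c - a" 0] by (simp add: e_def power2_eq_square algebra_simps)
  have "4 * (c - 1/4) * (a / e^3) = (c - 1/4) / (c * e) * (4 * a * c / e^2)"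
    using pos by (simp add: field_simps power2_eq_square power3_eq_cube)
  also have "\<dots> \<le> (c - 1/4) / (c * e)"
    using amgm pos c by (intro mult_left_le) (simp_all add: divide_le_eq)
  also have "(c - 1/4) / (c * e) = e / (c * e) - (1/4 + a) / (c * e)"
    unfolding diff_divide_distrib[symmetric] by (simp add: e_def)
  also have "\<dots> \<le> 1/c - 94/100 / (c * f)"
  proof -
    have "(1/4 + a) * f - 94/100 * e = (a - 69/100) * (c - 1/4)"
      by (simp add: e_def f_def field_simps)
    moreover have "0 \<le> (a - 69/100) * (c - 1/4)" using a c by simp
    ultimately have "94/100 * e \<le> (1/4 + a) * f" by linarith
    then have "94/100 / (c * f) \<le> (1/4 + a) / (c * e)"
      using pos by (simp add: divide_simps mult.commute mult.left_commute)
    then show ?thesis using pos by simp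
  qed
  finally show ?thesis by (simp add: e_def f_def)
qed

lemma ln3_term_ge:
  fixes b c :: real
  assumes b: "109/100 \<le> b" "b \<le> 11/10" and c: "0 < c"
  shows "(46/100 * c + 129/100) / (c * (c + 11/10)^3)
           \<le> b^2 / (c * (c + b)^2) - 2 * b / (3 * (c + b)^3)"
proof -
  have cb: "0 < c + b" using b c by simp
  have "b^2 / (c * (c + b)^2) - 2 * b / (3 * (c + b)^3)
      = ((b * b - 2 * b / 3) * c + b * b * b) / (c * (c + b)^3)"
  proof -
    define e where "e = c + b"
    have cb: "0 < e" using cb by (simp add: e_def)
    have "b^2 / (c * e^2) - 2 * b / (3 * e^3) = (b * (b * e - 2 * c / 3)) / (c * e^3)"
      using cb c by (simp add: e_def[symmetric] field_simps power2_eq_square power3_eq_cube)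
    moreover have "b * (b * e - 2 * c / 3) = (b * b - 2 * b / 3) * c + b * b * b"
      by (simp add: e_def algebra_simps)
    ultimately show ?thesis by (simp add: e_def)
  qed
  moreover have "(46/100 * c + 129/100) / (c * (c + 11/10)^3)
      \<le> ((b * b - 2 * b / 3) * c + b * b * b) / (c * (c + b)^3)"
  proof (rule frac_le)
    have "109/100 * (109/100 - 2/3) \<le> b * (b - 2/3)" using b by (intro mult_mono) simp_all
    moreover have "(109/100) * (109/100) * (109/100) \<le> b * b * b" using b by (intro mult_mono) simp_all
    ultimately show "46/100 * c + 129/100 \<le> (b * b - 2 * b / 3) * c + b * b * b"
      using c mult_right_mono[of "46/100" "b * b - 2 * b / 3" c]
      by (simp add: algebra_simps)
    then show "0 \<le> (b * b - 2 * b / 3) * c + b * b * b" using c by linarith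
    show "0 < c * (c + b)^3" using b c by simp
    show "c * (c + b)^3 \<le> c * (c + 11/10)^3" using b c by (intro mult_left_mono power_mono) simp_all
  qed
  ultimately show ?thesis by simp
qed

lemma inverse_taylor_le_rational:
  fixes L c :: real
  assumes L: "69/100 \<le> L" and c: "c = L + 1/4"
  shows "1 / (L + L^2/2)
           \<le> 94/100 / (c * (c + 69/100)) + 4 * L * ((46/100 * c + 129/100) / (c * (c + 11/10)^3))"
proof -
  define t where "t = L - 69/100"
  define u z where "u = c + 69/100" and "z = c + 11/10"
  define N where "N = 94/100 * z^3 + 4 * L * (46/100 * c + 129/100) * u"
  define D where "D = c * u * z^3"
  have pos: "0 < c" "0 < u" "0 < z" "0 < L + L^2/2"
    using L by (simp_all add: c u_def z_def add_pos_nonneg)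
  have "0 \<le> 99340706619/62500000000 + t*(33200258277/2500000000 + t*(598743697/25000000
      + t*(16309023/1000000 + t*(22319/5000 + t*(39/100)))))"
    using L by (simp add: t_def)
  moreover have "(L + L^2/2) * N - D
      = 99340706619/62500000000 + t*(33200258277/2500000000 + t*(598743697/25000000
          + t*(16309023/1000000 + t*(22319/5000 + t*(39/100)))))"
    by (simp add: N_def D_def u_def z_def c t_def field_simps power2_eq_square power3_eq_cube)
  ultimately have "D \<le> N * (L + L^2/2)" by (simp add: algebra_simps)
  then have "1 / (L + L^2/2) \<le> N / D"
    using pos by (simp add: D_def divide_simps)
  also have "N / D = 94/100 / (c * u) + 4 * L * ((46/100 * c + 129/100) / (c * z^3))"
    using pos by (simp add: N_def D_def field_simps)
  finally show ?thesis by (simp add: u_def z_def)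
qed

lemma majorant_add_correction_le:
  fixes L :: real
  assumes L: "ln 2 \<le> L"
  shows "log_sum_majorant L + 1 / (4 * L * (L + L^2/2)) \<le> 1 / L"
proof -
  define a b c where "a = ln (2::real)" and "b = ln (3::real)" and "c = L + 1/4"
  define A H where "A = a / (c + a)^3" and "H = b^2 / (c * (c + b)^2) - 2 * b / (3 * (c + b)^3)"
  have a: "69/100 \<le> a" using ln2_ge_69_over_100 by (simp add: a_def)
  have b: "109/100 \<le> b" "b \<le> 11/10" using ln3_ge_109_over_100 ln3_le_11_over_10 by (simp_all add: b_def)
  have L69: "69/100 \<le> L" using a L by (simp add: a_def)
  have "4 * L * ((46/100 * c + 129/100) / (c * (c + 11/10)^3)) \<le> 4 * L * H"
    using ln3_term_ge[OF b, of c] L69 unfolding H_def c_def by (intro mult_left_mono) simp_all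
  then have "1 / (L + L^2/2) \<le> (1/c - 4 * L * A) + 4 * L * H"
    using inverse_taylor_le_rational[OF L69 c_def] ln2_term_le[OF a, of c] L69
    by (simp add: A_def c_def)
  then have "(1 / (L + L^2/2)) / (4 * L) \<le> ((1/c - 4 * L * A) + 4 * L * H) / (4 * L)"
    using L69 by (intro divide_right_mono) simp_all
  moreover have "((1/c - 4 * L * A) + 4 * L * H) / (4 * L) = 1 / (4 * L * c) - A + H"
    using L69 by (simp add: field_simps)
  ultimately have "1 / (4 * L * (L + L^2/2)) \<le> 1 / (4 * L * c) - A + H"
    by (simp add: mult.commute)
  moreover have "1 / L = 1 / (4 * L * c) + b^2 / (c * (c + b)^2) + (c + 2 * b) / (c + b)^2"
  proof -
    have pos: "0 < L" "0 < c" "0 < c + b" using L69 b by (simp_all add: c_def)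
    have "1 / L - 1 / c = (c - L) / (L * c)" using pos by (simp add: field_simps)
    moreover have "1 / c - (c + 2 * b) / (c + b)^2 = ((c + b)^2 - c * (c + 2 * b)) / (c * (c + b)^2)"
      using pos by (simp add: diff_frac_eq)
    moreover have "(c + b)^2 - c * (c + 2 * b) = b^2" by (simp add: power2_eq_square algebra_simps)
    ultimately show ?thesis by (simp add: c_def)
  qed
  ultimately show ?thesis
    by (simp add: log_sum_majorant_def inv_log_sq_slope_def log_ratio_sq_def A_def H_def a_def b_def c_def)
qed

lemma sum_nu0_trans_prob_le:
  assumes m: "2 \<le> m" and F: "finite F" "F \<subseteq> {2..}"
  shows "(\<Sum>q\<in>F. nu0 (m * q) * trans_prob (m * q) m) \<le> nu0 m"
proof -
  define L where "L = ln (real m)"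
  have L: "ln 2 \<le> L" using m by (simp add: L_def)
  have "(\<Sum>q\<in>F. nu0 (m * q) * trans_prob (m * q) m)
      \<le> (\<Sum>q\<in>F. mangoldt_term m q)
         + (\<Sum>q\<in>F. if prime m \<and> primepow (m * q) then mangoldt_term m q else 0)"
    unfolding sum.distrib[symmetric] using F by (intro sum_mono nu0_trans_prob_le[OF m]) auto
  moreover have "(\<Sum>q\<in>F. mangoldt_term m q) \<le> log_sum_majorant L / real m"
  proof -
    have "(\<Sum>q\<in>F. mangoldt_term m q) = (\<Sum>q\<in>F. mangoldt q / (real q * (L + ln (real q))^2)) / real m"
      using m F by (auto simp: L_def sum_divide_distrib mangoldt_term_eq intro!: sum.cong)
    then show ?thesis
      using sum_mangoldt_inv_mult_log_sq_le[OF L F] m by (simp add: divide_right_mono)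
  qed
  moreover have "(\<Sum>q\<in>F. if prime m \<and> primepow (m * q) then mangoldt_term m q else 0)
      \<le> 1 / (4 * L * (L + L^2/2)) / real m"
  proof (cases "prime m")
    case True
    then show ?thesis using sum_prime_power_mangoldt_term_le[OF True F] by (simp add: L_def)
  next
    case False
    have "0 \<le> L" using L ln2_ge_two_thirds by linarith
    then show ?thesis using False by simp
  qed
  moreover have "log_sum_majorant L / real m + 1 / (4 * L * (L + L^2/2)) / real m \<le> (1 / L) / real m"
    using divide_right_mono[OF majorant_add_correction_le[OF L], of "real m"]
    by (simp add: add_divide_distrib)
  moreover have "(1 / L) / real m = nu0 m" by (simp add: nu0_def L_def)
  ultimately show ?thesis by linarith
qed

theorem lemma5p1:
  fixes m :: nat
  assumes "m \<ge> 2"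
  shows "(\<lambda>q. nu0 (m * q) * trans_prob (m * q) m) summable_on {2..}
     \<and> (\<Sum>\<^sub>\<infinity>q\<in>{2..}. nu0 (m * q) * trans_prob (m * q) m) \<le> nu0 m"
proof -
  define T where "T = (\<lambda>q. nu0 (m * q) * trans_prob (m * q) m)"
  have nonneg: "0 \<le> T q" if "q \<in> {2..}" for q
  proof -
    have "2 * 2 \<le> m * q" using that assms by (intro mult_le_mono) auto
    then show ?thesis
      using nu0_pos[of "m * q"] trans_prob_nonneg[of "m * q" m] by (simp add: T_def)
  qed
  have bound: "sum T F \<le> nu0 m" if "finite F" "F \<subseteq> {2..}" for F
    using sum_nu0_trans_prob_le[OF assms that] by (simp add: T_def)
  have summable: "T summable_on {2..}"
    using nonneg bound by (intro nonneg_bdd_above_summable_on bdd_aboveI[where M = "nu0 m"]) auto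
  then have "infsum T {2..} \<le> nu0 m"
    using bound by (intro infsum_le_finite_sums) auto
  with summable show ?thesis by (simp add: T_def)
qed

end
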